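(* For every $k\in\mathbb{N}$ and all words $A,B\in\mathsf{W}_\omega$ with $A\sim B$, we have $Ak\sim Bk$.
   Context: Words are finite strings over $\mathbb{N}$; $\mathsf{W}_\omega$ is the set of all words, $\Lambda$ the empty word, $Ak$ the word $A$ followed by the symbol $k$. For $k\in\mathbb{N}$, $\mathsf{S}_k$ is the set of words all of whose symbols are $\ge k$. Given a linear preorder $\precsim$ with $A\sim B$ iff $A\precsim B\wedge B\precsim A$ and $A\prec B$ iff $A\precsim B\wedge\neg B\precsim A$, a finite sequence $(A_1,\dots,A_p)$ is lexicographically not greater than $(B_1,\dots,B_q)$ iff either $p\le q$ and $A_i\sim B_i$ for all $i\le p$, or there is $s<\min(p,q)$ with $A_i\sim B_i$ for $i\le s$ and $A_{s+1}\prec B_{s+1}$. A lexicographically maximal subsequence of a finite sequence is a subsequence that is lexicographically not less than every subsequence. The linear preorder $\precsim$ on $\mathsf{W}_\omega$ is defined by recursion on (largest symbol of $AB$) $-$ (smallest symbol of $AB$): $\Lambda\precsim\Lambda$; if $AB$ is nonempty with minimal symbol $n$, write uniquely $A=A_1n\cdots nA_k$, $B=B_1n\cdots nB_l$ ($k,l\ge1$) with $A_i,B_j\in\mathsf{S}_{n+1}$ (possibly empty); let $C,D$ be lexicographically maximal subsequences of $(A_1,\dots,A_k)$, $(B_1,\dots,B_l)$; then $A\precsim B$ iff $C$ is lexicographically not greater than $D$. *)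

theory Defs
  imports Main
begin

type_synonym word = "nat list"

fun splitn :: "nat \<Rightarrow> word \<Rightarrow> word list" where
  "splitn n [] = [[]]"
| "splitn n (x # xs) =
     (if x = n then [] # splitn n xs
      else (case splitn n xs of [] \<Rightarrow> [[x]] | (y # ys) \<Rightarrow> (x # y) # ys))"

definition req :: "(word \<Rightarrow> word \<Rightarrow> bool) \<Rightarrow> word \<Rightarrow> word \<Rightarrow> bool" where
  "req R A B \<longleftrightarrow> R A B \<and> R B A"

definition rless :: "(word \<Rightarrow> word \<Rightarrow> bool) \<Rightarrow> word \<Rightarrow> word \<Rightarrow> bool" where
  "rless R A B \<longleftrightarrow> R A B \<and> \<not> R B A"

definition lexle :: "(word \<Rightarrow> word \<Rightarrow> bool) \<Rightarrow> word list \<Rightarrow> word list \<Rightarrow> bool" where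
  "lexle R as bs \<longleftrightarrow>
     (length as \<le> length bs \<and> (\<forall>i < length as. req R (as ! i) (bs ! i)))
   \<or> (\<exists>s < min (length as) (length bs).
        (\<forall>i < s. req R (as ! i) (bs ! i)) \<and> rless R (as ! s) (bs ! s))"

definition lexmax :: "(word \<Rightarrow> word \<Rightarrow> bool) \<Rightarrow> word list \<Rightarrow> word list" where
  "lexmax R xs = (SOME C. C \<in> set (subseqs xs) \<and> (\<forall>S \<in> set (subseqs xs). lexle R S C))"

text \<open>One step of the recursive definition: given the preorder R on words of
  smaller spread, compute the preorder on words.\<close>
definition wstep :: "(word \<Rightarrow> word \<Rightarrow> bool) \<Rightarrow> word \<Rightarrow> word \<Rightarrow> bool" where
  "wstep R A B =
     (if A @ B = [] then True
      else (let n = Min (set (A @ B))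
            in lexle R (lexmax R (splitn n A)) (lexmax R (splitn n B))))"

definition spread :: "word \<Rightarrow> nat" where
  "spread W = (if W = [] then 0 else Max (set W) - Min (set W))"

text \<open>The preorder: recursion on spread (A @ B), realised by iterating the step
  spread(A @ B) + 1 times; components of A, B have strictly smaller pairwise spread.\<close>
definition wle :: "word \<Rightarrow> word \<Rightarrow> bool" (infix "\<precsim>w" 50) where
  "A \<precsim>w B \<longleftrightarrow> (wstep ^^ Suc (spread (A @ B))) (\<lambda>_ _. True) A B"

definition wsim :: "word \<Rightarrow> word \<Rightarrow> bool" (infix "\<sim>w" 50) where
  "A \<sim>w B \<longleftrightarrow> A \<precsim>w B \<and> B \<precsim>w A"

end

theory Submission
  imports Defs
begin

text \<open>
  For a total preorder, the suffix maxima of a list (the entries that dominate every later entry)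
  form a lexicographically maximal subsequence. Hence, if every symbol of \<open>X\<close> and \<open>Y\<close> is at
  least \<open>n\<close>, the order of \<open>X\<close> and \<open>Y\<close> is the lexicographic order of the suffix maxima of their
  \<open>n\<close>-components, and \<open>X \<sim> Y\<close> means that these lists agree entrywise up to \<open>\<sim>\<close>.

  Appending \<open>k\<close> to a word whose symbols are all \<open>\<ge> k\<close> appends an empty \<open>k\<close>-component, which is
  least. Otherwise, splitting at the minimal symbol \<open>n < k\<close>, only the last component changes, from
  \<open>a\<close> to \<open>a k\<close>, and the suffix maxima of \<open>xs @ [a]\<close> are the entries of those of \<open>xs\<close> that are
  \<open>\<succeq> a\<close>, followed by \<open>a\<close>. Since \<open>a \<precsim> a k\<close>, the suffix maxima for \<open>A k\<close> are obtained from those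
  for \<open>A\<close> by the same operation as for \<open>B\<close>, and \<open>a k \<sim> b k\<close> holds by induction on length.
\<close>

lemma lexle_Nil [simp]: "lexle R [] ys"
  by (simp add: lexle_def)

lemma lexle_Cons_Nil [simp]: "\<not> lexle R (a # as) []"
  by (simp add: lexle_def)

lemma lexle_Cons_Cons [simp]:
  "lexle R (a # as) (b # bs) \<longleftrightarrow> rless R a b \<or> req R a b \<and> lexle R as bs"
  unfolding lexle_def
  by (simp only: length_Cons min_Suc_Suc All_less_Suc2 Ex_less_Suc2 nth_Cons_0 nth_Cons_Suc
      Suc_le_mono) blast

lemma splitn_neq_Nil [simp]: "splitn n X \<noteq> []"
  by (induction X) (auto split: list.split)

lemma splitn_eq_ConsE:
  obtains y ys where "splitn n X = y # ys"
  by (cases "splitn n X") auto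

lemma splitn_notin: "n \<notin> set X \<Longrightarrow> splitn n X = [X]"
  by (induction X) auto

lemma splitn_snoc:
  "splitn n (X @ [k]) =
     (if k = n then splitn n X @ [[]] else butlast (splitn n X) @ [last (splitn n X) @ [k]])"
proof (induction X)
  case (Cons x xs)
  obtain y ys where "splitn n xs = y # ys"
    by (rule splitn_eq_ConsE)
  with Cons show ?case
    by (cases ys) (auto split: list.split)
qed simp

lemma set_splitn: "c \<in> set (splitn n X) \<Longrightarrow> set c \<subseteq> set X - {n}"
proof (induction X arbitrary: c)
  case (Cons x xs)
  obtain y ys where "splitn n xs = y # ys"
    by (rule splitn_eq_ConsE)
  with Cons show ?case
    by (fastforce split: if_splits)
qed simp

lemma length_splitn:
  assumes "c \<in> set (splitn n X)"
  shows "length c \<le> length X" and "n \<in> set X \<Longrightarrow> length c < length X"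
proof -
  have "length c \<le> length X \<and> (n \<in> set X \<longrightarrow> length c < length X)"
    using assms
  proof (induction X arbitrary: c)
    case (Cons x xs)
    obtain y ys where "splitn n xs = y # ys"
      by (rule splitn_eq_ConsE)
    with Cons show ?case
      by (fastforce split: if_splits)
  qed simp
  then show "length c \<le> length X" and "n \<in> set X \<Longrightarrow> length c < length X"
    by auto
qed

definition total_preorder_on :: "('a \<Rightarrow> 'a \<Rightarrow> bool) \<Rightarrow> 'a set \<Rightarrow> bool" where
  "total_preorder_on R U \<longleftrightarrow>
     (\<forall>a\<in>U. \<forall>b\<in>U. R a b \<or> R b a) \<and> (\<forall>a\<in>U. \<forall>b\<in>U. \<forall>c\<in>U. R a b \<longrightarrow> R b c \<longrightarrow> R a c)"

lemma total_preorder_onD: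
  assumes "total_preorder_on R U"
  shows total_preorder_on_refl: "a \<in> U \<Longrightarrow> R a a"
    and total_preorder_on_total: "a \<in> U \<Longrightarrow> b \<in> U \<Longrightarrow> R a b \<or> R b a"
    and total_preorder_on_trans: "a \<in> U \<Longrightarrow> b \<in> U \<Longrightarrow> c \<in> U \<Longrightarrow> R a b \<Longrightarrow> R b c \<Longrightarrow> R a c"
  using assms unfolding total_preorder_on_def by blast+

lemma total_preorder_on_subset: "total_preorder_on R U \<Longrightarrow> V \<subseteq> U \<Longrightarrow> total_preorder_on R V"
  unfolding total_preorder_on_def by blast

lemma total_preorder_on_pullback:
  assumes "total_preorder_on R U" and "f ` V \<subseteq> U"
    and "\<And>x y. x \<in> V \<Longrightarrow> y \<in> V \<Longrightarrow> Q x y \<longleftrightarrow> R (f x) (f y)"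
  shows "total_preorder_on Q V"
  using assms unfolding total_preorder_on_def image_subset_iff by metis

lemma req_sym: "req R a b \<longleftrightarrow> req R b a"
  by (auto simp: req_def)

lemma lexle_append: "(\<And>a. a \<in> set xs \<Longrightarrow> R a a) \<Longrightarrow> lexle R xs (xs @ ys)"
  by (induction xs) (auto simp: req_def)

lemma lexle_total:
  "total_preorder_on R U \<Longrightarrow> set xs \<subseteq> U \<Longrightarrow> set ys \<subseteq> U \<Longrightarrow> lexle R xs ys \<or> lexle R ys xs"
proof (induction xs arbitrary: ys)
  case (Cons a xs)
  then show ?case
    by (cases ys) (auto simp: rless_def req_def dest: total_preorder_on_total)
qed simp

lemma lexle_trans:
  assumes "total_preorder_on R U" and "set xs \<subseteq> U" "set ys \<subseteq> U" "set zs \<subseteq> U"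
    and "lexle R xs ys" "lexle R ys zs"
  shows "lexle R xs zs"
  using assms(2-)
proof (induction xs arbitrary: ys zs)
  case (Cons a xs)
  then obtain b ys' c zs' where ys: "ys = b # ys'" and zs: "zs = c # zs'"
    by (metis lexle_Cons_Nil neq_Nil_conv)
  have "R a b \<Longrightarrow> R b c \<Longrightarrow> R a c" "R b c \<Longrightarrow> R c a \<Longrightarrow> R b a" "R c a \<Longrightarrow> R a b \<Longrightarrow> R c b"
    using Cons.prems ys zs total_preorder_on_trans[OF assms(1)] by auto
  with Cons show ?case
    unfolding ys zs by (auto simp: rless_def req_def)
qed simp

lemma lexle_antisym: "lexle R xs ys \<Longrightarrow> lexle R ys xs \<Longrightarrow> list_all2 (req R) xs ys"
proof (induction xs arbitrary: ys)
  case Nil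
  then show ?case
    by (cases ys) auto
next
  case (Cons a xs)
  then show ?case
    by (cases ys) (auto simp: rless_def req_def)
qed

lemma list_all2_req_lexle: "list_all2 (req R) xs ys \<Longrightarrow> lexle R xs ys"
  by (induction rule: list_all2_induct) auto

lemma list_all2_req_sym: "list_all2 (req R) xs ys \<Longrightarrow> list_all2 (req R) ys xs"
  by (induction rule: list_all2_induct) (auto simp: req_sym)

lemma lexle_list_all2_req_cong:
  assumes U: "total_preorder_on R U" "set xs \<subseteq> U" "set ys \<subseteq> U" "set xs' \<subseteq> U" "set ys' \<subseteq> U"
    and "list_all2 (req R) xs xs'" "list_all2 (req R) ys ys'"
  shows "lexle R xs ys \<longleftrightarrow> lexle R xs' ys'"
  using lexle_trans[OF U(1)] U(2-) list_all2_req_lexle list_all2_req_sym assms(6,7) by meson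

lemma total_preorder_on_lexle: "total_preorder_on R U \<Longrightarrow> total_preorder_on (lexle R) (lists U)"
  unfolding total_preorder_on_def[of "lexle R"]
  using lexle_total lexle_trans by (metis in_listsD subsetI)

lemma lexle_cong:
  "(\<And>a b. a \<in> set xs \<union> set ys \<Longrightarrow> b \<in> set xs \<union> set ys \<Longrightarrow> R a b \<longleftrightarrow> R' a b)
   \<Longrightarrow> lexle R xs ys \<longleftrightarrow> lexle R' xs ys"
proof (induction xs arbitrary: ys)
  case (Cons x xs)
  then show ?case
    by (cases ys) (simp_all add: rless_def req_def)
qed simp

fun suffix_maxima :: "('a \<Rightarrow> 'a \<Rightarrow> bool) \<Rightarrow> 'a list \<Rightarrow> 'a list" where
  "suffix_maxima R [] = []"
| "suffix_maxima R (x # xs) =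
     (if \<forall>y\<in>set xs. R y x then x # suffix_maxima R xs else suffix_maxima R xs)"

lemma suffix_maxima_snoc: "suffix_maxima R (xs @ [y]) = filter (R y) (suffix_maxima R xs) @ [y]"
  by (induction xs) auto

lemma set_suffix_maxima: "set (suffix_maxima R xs) \<subseteq> set xs"
  by (induction xs) auto

lemma suffix_maxima_in_subseqs: "suffix_maxima R xs \<in> set (subseqs xs)"
  by (induction xs) (auto simp: Let_def)

lemma suffix_maxima_eq_Nil_iff [simp]: "suffix_maxima R xs = [] \<longleftrightarrow> xs = []"
  by (cases xs rule: rev_cases) (simp_all add: suffix_maxima_snoc)

lemma set_subseqs_subset: "S \<in> set (subseqs xs) \<Longrightarrow> set S \<subseteq> set xs"
  using subseqs_powset[of xs] by (metis Pow_iff imageI)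

lemma hd_suffix_maxima_greatest:
  assumes "total_preorder_on R (set xs)" and "y \<in> set xs"
  shows "R y (hd (suffix_maxima R xs))"
  using assms
proof (induction xs arbitrary: y)
  case (Cons x xs)
  have tp: "total_preorder_on R (set xs)"
    using Cons.prems(1) by (rule total_preorder_on_subset) auto
  show ?case
  proof (cases "\<forall>z\<in>set xs. R z x")
    case True
    then show ?thesis
      using Cons.prems total_preorder_on_refl by fastforce
  next
    case False
    then obtain z where z: "z \<in> set xs" "\<not> R z x"
      by blast
    let ?h = "hd (suffix_maxima R xs)"
    have "suffix_maxima R xs \<noteq> []"
      using z(1) by auto
    then have "?h \<in> set xs"
      using subsetD[OF set_suffix_maxima hd_in_set] by blast
    moreover have "R x z"
      using z Cons.prems(1) total_preorder_on_total by fastforce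
    ultimately have "R x ?h"
      using Cons.IH[OF tp z(1)] z(1) Cons.prems(1) total_preorder_on_trans[of R "set (x # xs)" x z ?h]
      by simp
    then show ?thesis
      using Cons.IH[OF tp] Cons.prems(2) False by auto
  qed
qed simp

lemma rless_hd_suffix_maxima:
  assumes "total_preorder_on R (set (x # xs))" and "z \<in> set xs" "\<not> R z x"
  shows "rless R x (hd (suffix_maxima R xs))"
proof -
  let ?h = "hd (suffix_maxima R xs)"
  have "suffix_maxima R xs \<noteq> []"
    using assms(2) by auto
  then have "?h \<in> set xs"
    using subsetD[OF set_suffix_maxima hd_in_set] by blast
  moreover have "R z ?h"
    using assms total_preorder_on_subset hd_suffix_maxima_greatest by (metis set_subset_Cons)
  moreover have "R x z"
    using assms total_preorder_on_total by fastforce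
  ultimately show ?thesis
    using assms total_preorder_on_trans[OF assms(1)] unfolding rless_def by (meson list.set_intros)
qed

lemma in_set_subseqs_Cons:
  "S \<in> set (subseqs (x # xs)) \<longleftrightarrow>
     (\<exists>S'. S = x # S' \<and> S' \<in> set (subseqs xs)) \<or> S \<in> set (subseqs xs)"
  by (auto simp: Let_def)

lemma lexle_suffix_maxima:
  assumes "total_preorder_on R (set xs)" and "S \<in> set (subseqs xs)"
  shows "lexle R S (suffix_maxima R xs)"
  using assms
proof (induction xs arbitrary: S)
  case (Cons x xs)
  have tp: "total_preorder_on R (set xs)"
    using Cons.prems(1) by (rule total_preorder_on_subset) auto
  have IH: "\<And>S. S \<in> set (subseqs xs) \<Longrightarrow> lexle R S (suffix_maxima R xs)"
    using Cons.IH[OF tp] .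
  show ?case
  proof (cases "\<forall>y\<in>set xs. R y x")
    case True
    have "lexle R S (x # suffix_maxima R xs)"
      using Cons.prems(2) unfolding in_set_subseqs_Cons
    proof (elim disjE exE conjE)
      fix S' assume "S = x # S'" "S' \<in> set (subseqs xs)"
      moreover have "R x x"
        using Cons.prems(1) total_preorder_on_refl by fastforce
      ultimately show ?thesis
        using IH by (simp add: req_def)
    next
      assume S: "S \<in> set (subseqs xs)"
      show ?thesis
      proof (cases S)
        case (Cons s S')
        then have "R s x" and "S' \<in> set (subseqs xs)"
          using True S set_subseqs_subset Cons_in_subseqsD by fastforce+
        then show ?thesis
          using IH Cons by (auto simp: rless_def req_def)
      qed simp
    qed
    then show ?thesis
      using True by simp
  next
    case False
    then obtain z where "z \<in> set xs" "\<not> R z x"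
      by blast
    then have "rless R x (hd (suffix_maxima R xs))" and "suffix_maxima R xs \<noteq> []"
      using rless_hd_suffix_maxima[OF Cons.prems(1)] by auto
    then have "lexle R (x # S') (suffix_maxima R xs)" for S'
      by (cases "suffix_maxima R xs") simp_all
    then have "lexle R S (suffix_maxima R xs)"
      using Cons.prems(2) IH unfolding in_set_subseqs_Cons by blast
    then show ?thesis
      by (simp only: suffix_maxima.simps if_not_P[OF False])
  qed
qed simp

lemma lexmax_equiv_suffix_maxima:
  assumes "total_preorder_on R (set xs)"
  shows "lexmax R xs \<in> set (subseqs xs)"
    and "list_all2 (req R) (lexmax R xs) (suffix_maxima R xs)"
proof -
  have "\<exists>C. C \<in> set (subseqs xs) \<and> (\<forall>S \<in> set (subseqs xs). lexle R S C)"
    using suffix_maxima_in_subseqs lexle_suffix_maxima[OF assms] by blast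
  then have max: "lexmax R xs \<in> set (subseqs xs) \<and> (\<forall>S \<in> set (subseqs xs). lexle R S (lexmax R xs))"
    unfolding lexmax_def by (rule someI_ex)
  then show "lexmax R xs \<in> set (subseqs xs)"
    by blast
  show "list_all2 (req R) (lexmax R xs) (suffix_maxima R xs)"
    using max lexle_suffix_maxima[OF assms] suffix_maxima_in_subseqs lexle_antisym by blast
qed

lemma set_lexmax_subset: "total_preorder_on R (set xs) \<Longrightarrow> set (lexmax R xs) \<subseteq> set xs"
  using lexmax_equiv_suffix_maxima(1) set_subseqs_subset by blast

lemma lexmax_cong:
  assumes "\<And>a b. a \<in> set xs \<Longrightarrow> b \<in> set xs \<Longrightarrow> R a b \<longleftrightarrow> R' a b"
  shows "lexmax R xs = lexmax R' xs"
proof -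
  have eq: "lexle R S C \<longleftrightarrow> lexle R' S C"
    if "S \<in> set (subseqs xs)" "C \<in> set (subseqs xs)" for S C
  proof -
    have "set S \<union> set C \<subseteq> set xs"
      using that set_subseqs_subset by blast
    then show ?thesis
      by (intro lexle_cong assms) auto
  qed
  show ?thesis
    unfolding lexmax_def by (intro arg_cong[where f = Eps] ext conj_cong ball_cong refl eq)
qed

abbreviation wstep_iter :: "nat \<Rightarrow> word \<Rightarrow> word \<Rightarrow> bool" where
  "wstep_iter M \<equiv> (wstep ^^ M) (\<lambda>_ _. True)"

lemma wstep_iter_Nil: "wstep_iter M [] []"
  by (cases M) (simp_all add: wstep_def)

lemma wle_Nil_Nil: "[] \<precsim>w []"
  by (simp add: wle_def wstep_def)

lemma wstep_eq:
  "X @ Y \<noteq> [] \<Longrightarrow> wstep R X Y \<longleftrightarrow>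
     lexle R (lexmax R (splitn (Min (set (X @ Y))) X)) (lexmax R (splitn (Min (set (X @ Y))) Y))"
  unfolding wstep_def Let_def by (simp only: if_False simp_thms)

text \<open>The preorder hypothesis matters: \<open>lexmax\<close> is a Hilbert choice, and only when a maximal
  subsequence exists is it known to pick components, on which \<open>R\<close> and \<open>R'\<close> agree.\<close>

lemma wstep_cong:
  assumes ne: "X @ Y \<noteq> []" and n: "n = Min (set (X @ Y))"
    and C: "C = set (splitn n X) \<union> set (splitn n Y)"
    and agree: "\<And>a b. a \<in> C \<Longrightarrow> b \<in> C \<Longrightarrow> R a b \<longleftrightarrow> R' a b"
    and tp: "total_preorder_on R' C"
  shows "wstep R X Y \<longleftrightarrow> wstep R' X Y"
proof -
  have X: "lexmax R (splitn n X) = lexmax R' (splitn n X)"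
    and Y: "lexmax R (splitn n Y) = lexmax R' (splitn n Y)"
    using agree C by (blast intro: lexmax_cong)+
  have "total_preorder_on R' (set (splitn n X))" "total_preorder_on R' (set (splitn n Y))"
    using total_preorder_on_subset[OF tp] C by auto
  then have "set (lexmax R' (splitn n X)) \<subseteq> C" "set (lexmax R' (splitn n Y)) \<subseteq> C"
    using set_lexmax_subset C by blast+
  then have "lexle R (lexmax R' (splitn n X)) (lexmax R' (splitn n Y))
      \<longleftrightarrow> lexle R' (lexmax R' (splitn n X)) (lexmax R' (splitn n Y))"
    by (intro lexle_cong agree) auto
  then show ?thesis
    unfolding wstep_eq[OF ne] n[symmetric] X Y .
qed

lemma splitn_in_lists: "X \<in> lists {n..hi} \<Longrightarrow> c \<in> set (splitn n X) \<Longrightarrow> c \<in> lists {Suc n..hi}"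
  using set_splitn by fastforce

lemma spread_splitn_less:
  assumes ne: "X @ Y \<noteq> []" and n: "n = Min (set (X @ Y))"
    and a: "a \<in> set (splitn n X) \<union> set (splitn n Y)"
    and b: "b \<in> set (splitn n X) \<union> set (splitn n Y)"
    and ab: "a @ b \<noteq> []"
  shows "spread (a @ b) < spread (X @ Y)"
proof -
  have sub: "set (a @ b) \<subseteq> set (X @ Y) - {n}"
    using a b set_splitn by fastforce
  have "n < x" if "x \<in> set (a @ b)" for x
  proof -
    have "x \<in> set (X @ Y)" "x \<noteq> n"
      using that sub by auto
    then show ?thesis
      using n Min_le[OF finite_set] le_neq_implies_less by metis
  qed
  then have lower: "n < Min (set (a @ b))"
    using ab by (simp add: Min_gr_iff del: set_append)
  have upper: "Max (set (a @ b)) \<le> Max (set (X @ Y))"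
    using sub ab by (intro Max_mono) auto
  have "set (a @ b) \<noteq> {}"
    using ab by (simp del: set_append)
  then have "Min (set (a @ b)) \<le> Max (set (a @ b))"
    using Min_le[OF finite_set Max_in[OF finite_set]] by blast
  moreover have "spread (a @ b) = Max (set (a @ b)) - Min (set (a @ b))"
    and "spread (X @ Y) = Max (set (X @ Y)) - n"
    using ab ne n unfolding spread_def by (simp_all only: if_False)
  ultimately show ?thesis
    using lower upper by linarith
qed

definition iterates_stable_on :: "word set \<Rightarrow> bool" where
  "iterates_stable_on W \<longleftrightarrow>
     (\<forall>X\<in>W. \<forall>Y\<in>W. \<forall>M. spread (X @ Y) < M \<or> X @ Y = [] \<longrightarrow> wstep_iter M X Y = (X \<precsim>w Y))"

lemma iterates_stable_onD:
  "iterates_stable_on W \<Longrightarrow> X \<in> W \<Longrightarrow> Y \<in> W \<Longrightarrow> spread (X @ Y) < M \<or> X @ Y = []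
   \<Longrightarrow> wstep_iter M X Y = (X \<precsim>w Y)"
  unfolding iterates_stable_on_def by blast

lemma wstep_iter_Suc_eq_wstep_wle:
  assumes XY: "X \<in> lists {lo..hi}" "Y \<in> lists {lo..hi}" "X @ Y \<noteq> []" and m: "spread (X @ Y) \<le> m"
    and stable: "iterates_stable_on (lists {Suc lo..hi})"
    and tp: "total_preorder_on wle (lists {Suc lo..hi})"
  shows "wstep_iter (Suc m) X Y = wstep wle X Y"
proof -
  define n where "n = Min (set (X @ Y))"
  define C where "C = set (splitn n X) \<union> set (splitn n Y)"
  have "n \<in> set (X @ Y)" "\<forall>x\<in>set (X @ Y). n \<le> x"
    using XY(3) unfolding n_def by (simp_all del: set_append)
  then have "X \<in> lists {n..hi}" "Y \<in> lists {n..hi}" and "lo \<le> n"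
    using XY(1,2) by auto
  then have "C \<subseteq> lists {Suc n..hi}"
    unfolding C_def using splitn_in_lists by blast
  also have "\<dots> \<subseteq> lists {Suc lo..hi}"
    using \<open>lo \<le> n\<close> by (intro lists_mono) auto
  finally have C_lists: "C \<subseteq> lists {Suc lo..hi}" .
  have "wstep_iter m a b = (a \<precsim>w b)" if "a \<in> C" "b \<in> C" for a b
  proof -
    have "spread (a @ b) < m \<or> a @ b = []"
      using spread_splitn_less[OF XY(3) n_def, of a b] that m unfolding C_def
      by (cases "a @ b = []") auto
    moreover have "a \<in> lists {Suc lo..hi}" "b \<in> lists {Suc lo..hi}"
      using C_lists that by auto
    ultimately show ?thesis
      using iterates_stable_onD[OF stable] by blast
  qed
  then have "wstep (wstep_iter m) X Y = wstep wle X Y"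
    by (rule wstep_cong[OF XY(3) n_def C_def _ total_preorder_on_subset[OF tp C_lists]])
  then show ?thesis
    by (simp only: funpow.simps comp_apply)
qed

lemma wle_eq_lexle_suffix_maxima:
  assumes ge: "\<forall>x\<in>set (X @ Y). n \<le> x"
    and unfold: "n \<in> set (X @ Y) \<Longrightarrow> (X \<precsim>w Y) = wstep wle X Y"
    and tp: "total_preorder_on wle U" and U: "set (splitn n X) \<subseteq> U" "set (splitn n Y) \<subseteq> U"
  shows "(X \<precsim>w Y) = lexle wle (suffix_maxima wle (splitn n X)) (suffix_maxima wle (splitn n Y))"
proof (cases "n \<in> set (X @ Y)")
  case True
  then have ne: "X @ Y \<noteq> []"
    by auto
  have n: "Min (set (X @ Y)) = n"
    using ge True by (intro Min_eqI) auto
  have tX: "total_preorder_on wle (set (splitn n X))" and tY: "total_preorder_on wle (set (splitn n Y))"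
    using total_preorder_on_subset[OF tp] U by auto
  have "(X \<precsim>w Y) = wstep wle X Y"
    by (rule unfold[OF True])
  also have "\<dots> = lexle wle (lexmax wle (splitn n X)) (lexmax wle (splitn n Y))"
    unfolding wstep_eq[OF ne] n ..
  also have "\<dots> = lexle wle (suffix_maxima wle (splitn n X)) (suffix_maxima wle (splitn n Y))"
  proof (rule lexle_list_all2_req_cong[OF tp])
    show "set (lexmax wle (splitn n X)) \<subseteq> U" "set (lexmax wle (splitn n Y)) \<subseteq> U"
      using set_lexmax_subset[OF tX] set_lexmax_subset[OF tY] U by auto
    show "set (suffix_maxima wle (splitn n X)) \<subseteq> U" "set (suffix_maxima wle (splitn n Y)) \<subseteq> U"
      using set_suffix_maxima U by (meson order_trans)+
    show "list_all2 (req wle) (lexmax wle (splitn n X)) (suffix_maxima wle (splitn n X))"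
      "list_all2 (req wle) (lexmax wle (splitn n Y)) (suffix_maxima wle (splitn n Y))"
      using lexmax_equiv_suffix_maxima(2) tX tY by blast+
  qed
  finally show ?thesis .
next
  case False
  then have "splitn n X = [X]" "splitn n Y = [Y]"
    using splitn_notin by auto
  then show ?thesis
    by (auto simp: rless_def req_def)
qed

lemma wle_eq_wstep_on_lists:
  assumes "X \<in> lists {lo..hi}" "Y \<in> lists {lo..hi}" "X @ Y \<noteq> []"
    and "iterates_stable_on (lists {Suc lo..hi})" "total_preorder_on wle (lists {Suc lo..hi})"
  shows "(X \<precsim>w Y) = wstep wle X Y"
  using wstep_iter_Suc_eq_wstep_wle[OF assms(1-3) order_refl assms(4,5)] unfolding wle_def .

text \<open>Descending induction on the least admissible symbol: splitting a word over \<open>{lo..hi}\<close> at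
  any symbol \<open>n \<ge> lo\<close> yields components over \<open>{Suc lo..hi}\<close>, so both the stabilisation of the
  iterates and the preorder laws reduce to the smaller alphabet.\<close>

lemma iterates_stable_and_total_preorder_on_lists:
  assumes "lo \<le> Suc hi"
  shows "iterates_stable_on (lists {lo..hi}) \<and> total_preorder_on wle (lists {lo..hi})"
  using assms
proof (induction lo rule: inc_induct)
  case base
  have "lists {Suc hi..hi} = {[]}"
    by auto
  then show ?case
    using wstep_iter_Nil wle_Nil_Nil unfolding iterates_stable_on_def total_preorder_on_def by simp
next
  case (step lo)
  have stable: "iterates_stable_on (lists {Suc lo..hi})"
    and tp: "total_preorder_on wle (lists {Suc lo..hi})"
    using step.IH by blast+
  have "iterates_stable_on (lists {lo..hi})"
    unfolding iterates_stable_on_def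
  proof (intro ballI allI impI)
    fix X Y M
    assume X: "X \<in> lists {lo..hi}" and Y: "Y \<in> lists {lo..hi}"
      and M: "spread (X @ Y) < M \<or> X @ Y = []"
    show "wstep_iter M X Y = (X \<precsim>w Y)"
    proof (cases "X @ Y = []")
      case True
      then show ?thesis
        using wstep_iter_Nil wle_Nil_Nil by simp
    next
      case False
      then obtain m where "M = Suc m" "spread (X @ Y) \<le> m"
        using M by (cases M) auto
      then show ?thesis
        using wstep_iter_Suc_eq_wstep_wle[OF X Y False _ stable tp]
          wle_eq_wstep_on_lists[OF X Y False stable tp] by simp
    qed
  qed
  moreover have "total_preorder_on wle (lists {lo..hi})"
  proof (rule total_preorder_on_pullback[OF total_preorder_on_lexle[OF tp]])
    have "set (splitn lo X) \<subseteq> lists {Suc lo..hi}" if "X \<in> lists {lo..hi}" for X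
      using splitn_in_lists that by blast
    then show "(\<lambda>X. suffix_maxima wle (splitn lo X)) ` lists {lo..hi} \<subseteq> lists (lists {Suc lo..hi})"
      using set_suffix_maxima by fastforce
    show "(X \<precsim>w Y) = lexle wle (suffix_maxima wle (splitn lo X)) (suffix_maxima wle (splitn lo Y))"
      if X: "X \<in> lists {lo..hi}" and Y: "Y \<in> lists {lo..hi}" for X Y
    proof (rule wle_eq_lexle_suffix_maxima[OF _ _ tp])
      show "\<forall>x\<in>set (X @ Y). lo \<le> x"
        using X Y by auto
      show "lo \<in> set (X @ Y) \<Longrightarrow> (X \<precsim>w Y) = wstep wle X Y"
        by (rule wle_eq_wstep_on_lists[OF X Y _ stable tp]) auto
      show "set (splitn lo X) \<subseteq> lists {Suc lo..hi}" "set (splitn lo Y) \<subseteq> lists {Suc lo..hi}"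
        using X Y splitn_in_lists by blast+
    qed
  qed
  ultimately show ?case ..
qed

lemma finite_subset_lists_atLeastAtMost:
  fixes W :: "nat list set"
  assumes "finite W"
  obtains hi where "W \<subseteq> lists {0..hi}"
proof -
  define hi where "hi = Max (insert 0 (\<Union>X\<in>W. set X))"
  have "x \<le> hi" if "X \<in> W" "x \<in> set X" for X x
    unfolding hi_def using that assms by (intro Max_ge) auto
  then have "W \<subseteq> lists {0..hi}"
    by auto
  then show ?thesis ..
qed

lemma total_preorder_on_wle_finite:
  assumes "finite W"
  shows "total_preorder_on wle W"
proof -
  obtain hi where W: "W \<subseteq> lists {0..hi}"
    using finite_subset_lists_atLeastAtMost[OF assms] .
  have "total_preorder_on wle (lists {0..hi})"
    using iterates_stable_and_total_preorder_on_lists[of 0 hi] by simp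
  then show ?thesis
    using W by (rule total_preorder_on_subset)
qed

lemma wle_refl: "X \<precsim>w X"
  using total_preorder_on_refl[OF total_preorder_on_wle_finite[of "{X}"]] by simp

lemma wle_total: "X \<precsim>w Y \<or> Y \<precsim>w X"
  using total_preorder_on_total[OF total_preorder_on_wle_finite[of "{X, Y}"]] by simp

lemma wle_trans: "X \<precsim>w Y \<Longrightarrow> Y \<precsim>w Z \<Longrightarrow> X \<precsim>w Z"
  using total_preorder_on_trans[OF total_preorder_on_wle_finite[of "{X, Y, Z}"], of X Y Z] by simp

lemma total_preorder_on_wle: "total_preorder_on wle UNIV"
  unfolding total_preorder_on_def using wle_total wle_trans by blast

lemma wle_unfold: "X @ Y \<noteq> [] \<Longrightarrow> (X \<precsim>w Y) = wstep wle X Y"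
proof -
  assume ne: "X @ Y \<noteq> []"
  have "finite {X, Y}"
    by simp
  then obtain hi where "{X, Y} \<subseteq> lists {0..hi}"
    by (rule finite_subset_lists_atLeastAtMost)
  moreover have "iterates_stable_on (lists {Suc 0..hi})" "total_preorder_on wle (lists {Suc 0..hi})"
    using iterates_stable_and_total_preorder_on_lists[of "Suc 0" hi] by simp_all
  ultimately show ?thesis
    using wle_eq_wstep_on_lists[of X 0 hi Y] ne by simp
qed

lemma lexle_filter_snoc_mono:
  assumes total: "\<And>x y. R x y \<or> R y x" and trans: "\<And>x y z. R x y \<Longrightarrow> R y z \<Longrightarrow> R x z"
    and "R a a'"
  shows "lexle R (filter (R a) S @ [a]) (filter (R a') S @ [a'])"
proof (induction S)
  case Nil
  then show ?case
    using \<open>R a a'\<close> by (auto simp: rless_def req_def)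
next
  case (Cons c S)
  have refl: "R x x" for x
    using total by blast
  consider "R a' c" | "\<not> R a' c" "R a c" | "\<not> R a' c" "\<not> R a c"
    by blast
  then show ?case
  proof cases
    case 1
    moreover have "R a c"
      using trans \<open>R a a'\<close> 1 .
    ultimately show ?thesis
      using Cons.IH refl by (simp add: req_def)
  next
    case 2
    obtain h rest where hr: "filter (R a') S @ [a'] = h # rest"
      by (cases "filter (R a') S @ [a']") auto
    have "\<forall>x\<in>set (filter (R a') S @ [a']). R a' x"
      using refl by auto
    then have "R a' h"
      unfolding hr by simp
    moreover have "R c a'"
      using 2 total by blast
    ultimately have "rless R c h"
      using 2 trans unfolding rless_def by blast
    then show ?thesis
      using 2 hr by simp
  next
    case 3
    then show ?thesis
      using Cons.IH by simp
  qed
qed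

lemma list_all2_filter:
  "list_all2 P xs ys \<Longrightarrow> (\<And>x y. P x y \<Longrightarrow> Q x \<longleftrightarrow> Q' y) \<Longrightarrow> list_all2 P (filter Q xs) (filter Q' ys)"
  by (induction rule: list_all2_induct) auto

lemma list_all2_req_filter_snoc:
  assumes trans: "\<And>x y z. R x y \<Longrightarrow> R y z \<Longrightarrow> R x z"
    and eq: "list_all2 (req R) (filter (R a) S @ [a]) (filter (R b) T @ [b])"
    and "R a a'" "R b b'" "req R a' b'"
  shows "list_all2 (req R) (filter (R a') S @ [a']) (filter (R b') T @ [b'])"
proof -
  have "length (filter (R a) S) = length (filter (R b) T)"
    using list_all2_lengthD[OF eq] by simp
  then have "list_all2 (req R) (filter (R a) S) (filter (R b) T)"
    using eq by (simp add: list_all2_append)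
  moreover have "R a' x \<longleftrightarrow> R b' y" if "req R x y" for x y
    using that \<open>req R a' b'\<close> trans unfolding req_def by blast
  ultimately have "list_all2 (req R) (filter (R a') (filter (R a) S)) (filter (R b') (filter (R b) T))"
    by (rule list_all2_filter)
  moreover have "R a x \<and> R a' x \<longleftrightarrow> R a' x" "R b x \<and> R b' x \<longleftrightarrow> R b' x" for x
    using \<open>R a a'\<close> \<open>R b b'\<close> trans by blast+
  ultimately have "list_all2 (req R) (filter (R a') S) (filter (R b') T)"
    by (simp add: filter_filter)
  then show ?thesis
    using \<open>req R a' b'\<close> by (simp add: list_all2_appendI)
qed

text \<open>Up to \<open>\<sim>\<close>, the lexicographically maximal subsequence \<open>C\<close> of the \<open>n\<close>-components of \<open>X\<close>.\<close>

definition maximal_components :: "nat \<Rightarrow> word \<Rightarrow> word list" where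
  "maximal_components n X = suffix_maxima wle (splitn n X)"

lemma wle_iff_maximal_components:
  "\<forall>x\<in>set (X @ Y). n \<le> x \<Longrightarrow>
     (X \<precsim>w Y) \<longleftrightarrow> lexle wle (maximal_components n X) (maximal_components n Y)"
  unfolding maximal_components_def
  by (rule wle_eq_lexle_suffix_maxima[OF _ wle_unfold total_preorder_on_wle]) auto

lemma req_wle_eq_wsim: "req wle = wsim"
  by (intro ext) (simp add: req_def wsim_def)

lemma wsim_iff_maximal_components:
  assumes "\<forall>x\<in>set (X @ Y). n \<le> x"
  shows "(X \<sim>w Y) \<longleftrightarrow> list_all2 wsim (maximal_components n X) (maximal_components n Y)"
proof -
  have XY: "(X \<precsim>w Y) \<longleftrightarrow> lexle wle (maximal_components n X) (maximal_components n Y)"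
    and YX: "(Y \<precsim>w X) \<longleftrightarrow> lexle wle (maximal_components n Y) (maximal_components n X)"
    using wle_iff_maximal_components assms by (simp_all add: Un_commute)
  show ?thesis
  proof
    assume "X \<sim>w Y"
    then have "list_all2 (req wle) (maximal_components n X) (maximal_components n Y)"
      using XY YX lexle_antisym unfolding wsim_def by blast
    then show "list_all2 wsim (maximal_components n X) (maximal_components n Y)"
      by (simp only: req_wle_eq_wsim)
  next
    assume "list_all2 wsim (maximal_components n X) (maximal_components n Y)"
    then have "list_all2 (req wle) (maximal_components n X) (maximal_components n Y)"
      by (simp only: req_wle_eq_wsim)
    then show "X \<sim>w Y"
      using XY YX list_all2_req_lexle list_all2_req_sym unfolding wsim_def by blast
  qed
qed

lemma Nil_wle: "[] \<precsim>w X"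
proof (induction "length X" arbitrary: X rule: less_induct)
  case less
  show ?case
  proof (cases "X = []")
    case True
    then show ?thesis
      using wle_refl by simp
  next
    case False
    define n where "n = Min (set X)"
    have "n \<in> set X" and ge: "\<forall>x\<in>set ([] @ X). n \<le> x"
      using False unfolding n_def by simp_all
    obtain h rest where hr: "maximal_components n X = h # rest"
      unfolding maximal_components_def by (cases "suffix_maxima wle (splitn n X)") auto
    then have "h \<in> set (suffix_maxima wle (splitn n X))"
      unfolding maximal_components_def by simp
    then have "h \<in> set (splitn n X)"
      by (rule subsetD[OF set_suffix_maxima])
    then have "length h < length X"
      using \<open>n \<in> set X\<close> by (rule length_splitn(2))
    then have "[] \<precsim>w h"
      by (rule less)
    then have "lexle wle [[]] (h # rest)"
      by (auto simp: rless_def req_def)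
    then show ?thesis
      using wle_iff_maximal_components[OF ge] hr by (simp add: maximal_components_def)
  qed
qed

lemma list_all2_snoc: "list_all2 P (xs @ [x]) (ys @ [y]) \<longleftrightarrow> list_all2 P xs ys \<and> P x y"
  by (subst list_all2_rev[symmetric]) (simp add: conj_commute)

lemma maximal_components_snoc_same: "maximal_components k (X @ [k]) = maximal_components k X @ [[]]"
  by (simp add: maximal_components_def splitn_snoc suffix_maxima_snoc Nil_wle)

lemma maximal_components_eq_filter_last:
  "maximal_components n X =
     filter (wle (last (splitn n X))) (suffix_maxima wle (butlast (splitn n X))) @ [last (splitn n X)]"
  unfolding maximal_components_def
  by (metis append_butlast_last_id splitn_neq_Nil suffix_maxima_snoc)

lemma maximal_components_snoc_other:
  "k \<noteq> n \<Longrightarrow> maximal_components n (X @ [k]) =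
     filter (wle (last (splitn n X) @ [k])) (suffix_maxima wle (butlast (splitn n X)))
     @ [last (splitn n X) @ [k]]"
  by (simp add: maximal_components_def splitn_snoc suffix_maxima_snoc)

lemma length_last_splitn_less: "n \<in> set X \<Longrightarrow> length (last (splitn n X)) < length X"
  using length_splitn(2) last_in_set splitn_neq_Nil by blast

lemma length_last_splitn_le: "length (last (splitn n X)) \<le> length X"
  using length_splitn(1) last_in_set splitn_neq_Nil by blast

lemma wle_snoc: "X \<precsim>w X @ [k]"
proof (induction "length X" arbitrary: X rule: less_induct)
  case less
  show ?case
  proof (cases "\<forall>x\<in>set X. k \<le> x")
    case True
    then have "\<forall>x\<in>set (X @ X @ [k]). k \<le> x"
      by auto
    moreover have "lexle wle (maximal_components k X) (maximal_components k X @ [[]])"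
      using lexle_append wle_refl by blast
    ultimately show ?thesis
      using wle_iff_maximal_components maximal_components_snoc_same by metis
  next
    case False
    define n where "n = Min (set X)"
    define a where "a = last (splitn n X)"
    have "X \<noteq> []"
      using False by auto
    then have "n \<in> set X" and "\<forall>y\<in>set X. n \<le> y"
      unfolding n_def by simp_all
    then have "n < k"
      using False by (meson le_less_trans not_le)
    then have ge: "\<forall>y\<in>set (X @ X @ [k]). n \<le> y"
      using \<open>\<forall>y\<in>set X. n \<le> y\<close> by auto
    have "a \<precsim>w a @ [k]"
      unfolding a_def using length_last_splitn_less[OF \<open>n \<in> set X\<close>] by (rule less)
    then have "lexle wle (maximal_components n X) (maximal_components n (X @ [k]))"
      unfolding maximal_components_eq_filter_last[of n X] maximal_components_snoc_other[OF \<open>n < k\<close>[THEN less_imp_neq, symmetric]]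
      using lexle_filter_snoc_mono wle_total wle_trans a_def by metis
    then show ?thesis
      using wle_iff_maximal_components[OF ge] by blast
  qed
qed

lemma wsim_snoc_of_le:
  assumes ge: "\<forall>x\<in>set (A @ B). k \<le> x" and "A \<sim>w B"
  shows "A @ [k] \<sim>w B @ [k]"
proof -
  have "list_all2 wsim (maximal_components k A) (maximal_components k B)"
    using wsim_iff_maximal_components[OF ge] \<open>A \<sim>w B\<close> by blast
  moreover have "[] \<sim>w []"
    using wle_refl by (simp add: wsim_def)
  ultimately have "list_all2 wsim (maximal_components k (A @ [k])) (maximal_components k (B @ [k]))"
    by (simp add: maximal_components_snoc_same list_all2_snoc)
  moreover have "\<forall>x\<in>set ((A @ [k]) @ (B @ [k])). k \<le> x"
    using ge by auto
  ultimately show ?thesis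
    using wsim_iff_maximal_components by blast
qed

lemma wsim_last_splitn:
  assumes "\<forall>x\<in>set (A @ B). n \<le> x" and "A \<sim>w B"
  shows "last (splitn n A) \<sim>w last (splitn n B)"
  using wsim_iff_maximal_components[OF assms(1)] assms(2)
  unfolding maximal_components_eq_filter_last[of n A] maximal_components_eq_filter_last[of n B]
    list_all2_snoc by blast

lemma wsim_snoc_of_less:
  assumes ge: "\<forall>x\<in>set (A @ B). n \<le> x" and "n < k" and "A \<sim>w B"
    and last: "last (splitn n A) @ [k] \<sim>w last (splitn n B) @ [k]"
  shows "A @ [k] \<sim>w B @ [k]"
proof -
  have "list_all2 (req wle) (maximal_components n A) (maximal_components n B)"
    using wsim_iff_maximal_components[OF ge] \<open>A \<sim>w B\<close> by (simp add: req_wle_eq_wsim)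
  then have "list_all2 (req wle) (maximal_components n (A @ [k])) (maximal_components n (B @ [k]))"
    unfolding maximal_components_eq_filter_last[of n A] maximal_components_eq_filter_last[of n B]
      maximal_components_snoc_other[OF \<open>n < k\<close>[THEN less_imp_neq, symmetric]]
    using list_all2_req_filter_snoc[where R = wle, OF wle_trans _ wle_snoc wle_snoc] last
    by (simp add: req_wle_eq_wsim)
  moreover have "\<forall>x\<in>set ((A @ [k]) @ (B @ [k])). n \<le> x"
    using ge \<open>n < k\<close> by auto
  ultimately show ?thesis
    using wsim_iff_maximal_components by (simp add: req_wle_eq_wsim)
qed

theorem lemma3:
  fixes k :: nat and A B :: "nat list"
  assumes "A \<sim>w B"
  shows "(A @ [k]) \<sim>w (B @ [k])"
  using assms
proof (induction "length A + length B" arbitrary: A B rule: less_induct)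
  case less
  show ?case
  proof (cases "\<forall>x\<in>set (A @ B). k \<le> x")
    case True
    then show ?thesis
      using wsim_snoc_of_le less.prems by blast
  next
    case False
    define n where "n = Min (set (A @ B))"
    have "A @ B \<noteq> []"
      using False by auto
    then have "n \<in> set (A @ B)" and ge: "\<forall>x\<in>set (A @ B). n \<le> x"
      unfolding n_def by (simp_all del: set_append)
    then have "n < k"
      using False by (meson le_less_trans not_le)
    have "length (last (splitn n A)) + length (last (splitn n B)) < length A + length B"
      using \<open>n \<in> set (A @ B)\<close> length_last_splitn_less length_last_splitn_le
      by (metis add_le_less_mono add_less_le_mono Un_iff set_append)
    then have "last (splitn n A) @ [k] \<sim>w last (splitn n B) @ [k]"
      using less.hyps wsim_last_splitn[OF ge less.prems] by blast
    then show ?thesis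
      using wsim_snoc_of_less[OF ge \<open>n < k\<close> less.prems] by blast
  qed
qed

end
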